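(* Let $L_1,L_2,L_3$ be lines of the spine space $\mathfrak M$ which are pairwise coplanar, whose closures $\overline{L_1},\overline{L_2},\overline{L_3}$ have a common point (proper or improper; i.e. the lines are concurrent or parallel), and which are not all contained in one plane of $\mathfrak M$. Then $L_1,L_2,L_3$ are all contained in one star or in one top of $\mathfrak M$.
   Context: Setup. Let $V$ be a vector space of finite dimension $n\ge 3$ over a division ring; $\mathrm{Sub}_j(V)$ is the set of $j$-dimensional subspaces of $V$. Fix $k$ with $1<k<n-1$, a subspace $W$ of $V$ with $w:=\dim W$, and an integer $m$ with $k-(n-w)\le m\le\min\{k,w\}$. For $H\in\mathrm{Sub}_{k-1}(V)$, $B\in\mathrm{Sub}_{k+1}(V)$, $H\subset B$, the $k$-pencil is $\mathbf p(H,B)=\{U\in\mathrm{Sub}_k(V):H\subset U\subset B\}$; the Grassmann space $\mathbf P_k(V)$ has points $\mathrm{Sub}_k(V)$ and lines the $k$-pencils. The spine space $\mathfrak M$ has point set $S=\{U\in\mathrm{Sub}_k(V):\dim(U\cap W)=m\}$ and line set $\mathcal L=\{\ell\cap S:\ell\text{ a $k$-pencil},\ |\ell\cap S|\ge2\}$; points of $\mathrm{Sub}_k(V)\setminus S$ are improper. Each $L\in\mathcal L$ lies in a unique $k$-pencil $\overline L$ (its closure); $L$ is projective if $L=\overline L$, affine if $|\overline L\setminus L|=1$. Affine lines are parallel if their closures meet in an improper point. A plane of $\mathbf P_k(V)$ is a set $\{U\in\mathrm{Sub}_k(V):Y\subset U\subset Z\}$ with $(\dim Y,\dim Z)=(k-2,k+1)$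 or $(k-1,k+2)$; a plane of $\mathfrak M$ is a set $E=P\cap S$ with $P$ a plane of $\mathbf P_k(V)$, containing two distinct lines of $\mathfrak M$; write $\overline E=P$. Lines $L_1,L_2$ are coplanar ($L_1\,\boldsymbol\pi\,L_2$) if some plane of $\mathfrak M$ contains both. The maximal strong subspaces (maximal sets of pairwise collinear points) of $\mathfrak M$ are: $\omega$-stars $\{U\in\mathrm{Sub}_k(V):H\subset U\subset H+W\}$ ($H\in\mathrm{Sub}_{k-1}(V)$, $\dim(H\cap W)=m-1$); $\alpha$-stars $\{U\in S:H\subset U\}$ ($H\in\mathrm{Sub}_{k-1}(V)$, $\dim(H\cap W)=m$); $\alpha$-tops $\{U\in\mathrm{Sub}_k(V):B\cap W\subset U\subset B\}$ ($B\in\mathrm{Sub}_{k+1}(V)$, $\dim(B\cap W)=m$); $\omega$-tops $\{U\in S:U\subset B\}$ ($B\in\mathrm{Sub}_{k+1}(V)$, $\dim(B\cap W)=m+1$). Stars are $\omega$- and $\alpha$-stars; tops are $\alpha$- and $\omega$-tops. *)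

theory Defs
  imports Main
begin

text \<open>A left vector space over a division ring: the vectors are the elements of the
type 'v (so V is UNIV), scalars of class division_ring, scalar multiplication s.\<close>

definition lvs :: "('k::division_ring \<Rightarrow> 'v::ab_group_add \<Rightarrow> 'v) \<Rightarrow> bool" where
  "lvs s \<longleftrightarrow> (\<forall>a x y. s a (x + y) = s a x + s a y) \<and> (\<forall>a b x. s (a + b) x = s a x + s b x)
      \<and> (\<forall>a b x. s a (s b x) = s (a * b) x) \<and> (\<forall>x. s 1 x = x)"

definition subsp :: "('k::division_ring \<Rightarrow> 'v::ab_group_add \<Rightarrow> 'v) \<Rightarrow> 'v set \<Rightarrow> bool" where
  "subsp s U \<longleftrightarrow> 0 \<in> U \<and> (\<forall>x\<in>U. \<forall>y\<in>U. x + y \<in> U) \<and> (\<forall>a. \<forall>x\<in>U. s a x \<in> U)"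

definition lspan :: "('k::division_ring \<Rightarrow> 'v::ab_group_add \<Rightarrow> 'v) \<Rightarrow> 'v set \<Rightarrow> 'v set" where
  "lspan s A = \<Inter>{U. subsp s U \<and> A \<subseteq> U}"

definition lin_indep :: "('k::division_ring \<Rightarrow> 'v::ab_group_add \<Rightarrow> 'v) \<Rightarrow> 'v set \<Rightarrow> bool" where
  "lin_indep s A \<longleftrightarrow> (\<forall>a\<in>A. a \<notin> lspan s (A - {a}))"

definition has_dim :: "('k::division_ring \<Rightarrow> 'v::ab_group_add \<Rightarrow> 'v) \<Rightarrow> 'v set \<Rightarrow> nat \<Rightarrow> bool" where
  "has_dim s U d \<longleftrightarrow> subsp s U \<and>
     (\<exists>B. finite B \<and> card B = d \<and> lin_indep s B \<and> B \<subseteq> U \<and> lspan s B = U)"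

definition Sub :: "('k::division_ring \<Rightarrow> 'v::ab_group_add \<Rightarrow> 'v) \<Rightarrow> nat \<Rightarrow> 'v set set" where
  "Sub s d = {U. has_dim s U d}"

definition subsum :: "'v::ab_group_add set \<Rightarrow> 'v set \<Rightarrow> 'v set" where
  "subsum A B = {x + y | x y. x \<in> A \<and> y \<in> B}"

definition pencil :: "('k::division_ring \<Rightarrow> 'v::ab_group_add \<Rightarrow> 'v) \<Rightarrow> nat \<Rightarrow> 'v set \<Rightarrow> 'v set \<Rightarrow> 'v set set" where
  "pencil s k H B = {U \<in> Sub s k. H \<subseteq> U \<and> U \<subseteq> B}"

definition is_pencil :: "('k::division_ring \<Rightarrow> 'v::ab_group_add \<Rightarrow> 'v) \<Rightarrow> nat \<Rightarrow> 'v set set \<Rightarrow> bool" where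
  "is_pencil s k l \<longleftrightarrow> (\<exists>H B. H \<in> Sub s (k - 1) \<and> B \<in> Sub s (k + 1) \<and> H \<subseteq> B \<and> l = pencil s k H B)"

definition spine_points :: "('k::division_ring \<Rightarrow> 'v::ab_group_add \<Rightarrow> 'v) \<Rightarrow> nat \<Rightarrow> 'v set \<Rightarrow> nat \<Rightarrow> 'v set set" where
  "spine_points s k W m = {U \<in> Sub s k. has_dim s (U \<inter> W) m}"

definition spine_line :: "('k::division_ring \<Rightarrow> 'v::ab_group_add \<Rightarrow> 'v) \<Rightarrow> nat \<Rightarrow> 'v set \<Rightarrow> nat \<Rightarrow> 'v set set \<Rightarrow> bool" where
  "spine_line s k W m L \<longleftrightarrow> (\<exists>l. is_pencil s k l \<and> L = l \<inter> spine_points s k W m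
      \<and> (\<exists>x y. x \<noteq> y \<and> x \<in> L \<and> y \<in> L))"

definition line_closure :: "('k::division_ring \<Rightarrow> 'v::ab_group_add \<Rightarrow> 'v) \<Rightarrow> nat \<Rightarrow> 'v set set \<Rightarrow> 'v set set" where
  "line_closure s k L = (THE l. is_pencil s k l \<and> L \<subseteq> l)"

definition is_PG_plane :: "('k::division_ring \<Rightarrow> 'v::ab_group_add \<Rightarrow> 'v) \<Rightarrow> nat \<Rightarrow> 'v set set \<Rightarrow> bool" where
  "is_PG_plane s k P \<longleftrightarrow> (\<exists>Y Z. ((Y \<in> Sub s (k - 2) \<and> Z \<in> Sub s (k + 1)) \<or> (Y \<in> Sub s (k - 1) \<and> Z \<in> Sub s (k + 2)))
      \<and> P = {U \<in> Sub s k. Y \<subseteq> U \<and> U \<subseteq> Z})"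

definition spine_plane :: "('k::division_ring \<Rightarrow> 'v::ab_group_add \<Rightarrow> 'v) \<Rightarrow> nat \<Rightarrow> 'v set \<Rightarrow> nat \<Rightarrow> 'v set set \<Rightarrow> bool" where
  "spine_plane s k W m E \<longleftrightarrow> (\<exists>P. is_PG_plane s k P \<and> E = P \<inter> spine_points s k W m
      \<and> (\<exists>L1 L2. L1 \<noteq> L2 \<and> spine_line s k W m L1 \<and> spine_line s k W m L2 \<and> L1 \<subseteq> E \<and> L2 \<subseteq> E))"

definition coplanar :: "('k::division_ring \<Rightarrow> 'v::ab_group_add \<Rightarrow> 'v) \<Rightarrow> nat \<Rightarrow> 'v set \<Rightarrow> nat \<Rightarrow> 'v set set \<Rightarrow> 'v set set \<Rightarrow> bool" where
  "coplanar s k W m L1 L2 \<longleftrightarrow> (\<exists>E. spine_plane s k W m E \<and> L1 \<subseteq> E \<and> L2 \<subseteq> E)"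

definition omega_star :: "('k::division_ring \<Rightarrow> 'v::ab_group_add \<Rightarrow> 'v) \<Rightarrow> nat \<Rightarrow> 'v set \<Rightarrow> nat \<Rightarrow> 'v set set \<Rightarrow> bool" where
  "omega_star s k W m X \<longleftrightarrow> (\<exists>H. H \<in> Sub s (k - 1) \<and> 1 \<le> m \<and> has_dim s (H \<inter> W) (m - 1)
      \<and> X = {U \<in> Sub s k. H \<subseteq> U \<and> U \<subseteq> subsum H W})"

definition alpha_star :: "('k::division_ring \<Rightarrow> 'v::ab_group_add \<Rightarrow> 'v) \<Rightarrow> nat \<Rightarrow> 'v set \<Rightarrow> nat \<Rightarrow> 'v set set \<Rightarrow> bool" where
  "alpha_star s k W m X \<longleftrightarrow> (\<exists>H. H \<in> Sub s (k - 1) \<and> has_dim s (H \<inter> W) m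
      \<and> X = {U \<in> spine_points s k W m. H \<subseteq> U})"

definition alpha_top :: "('k::division_ring \<Rightarrow> 'v::ab_group_add \<Rightarrow> 'v) \<Rightarrow> nat \<Rightarrow> 'v set \<Rightarrow> nat \<Rightarrow> 'v set set \<Rightarrow> bool" where
  "alpha_top s k W m X \<longleftrightarrow> (\<exists>B. B \<in> Sub s (k + 1) \<and> has_dim s (B \<inter> W) m
      \<and> X = {U \<in> Sub s k. B \<inter> W \<subseteq> U \<and> U \<subseteq> B})"

definition omega_top :: "('k::division_ring \<Rightarrow> 'v::ab_group_add \<Rightarrow> 'v) \<Rightarrow> nat \<Rightarrow> 'v set \<Rightarrow> nat \<Rightarrow> 'v set set \<Rightarrow> bool" where
  "omega_top s k W m X \<longleftrightarrow> (\<exists>B. B \<in> Sub s (k + 1) \<and> has_dim s (B \<inter> W) (m + 1)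
      \<and> X = {U \<in> spine_points s k W m. U \<subseteq> B})"

definition is_star where
  "is_star s k W m X \<longleftrightarrow> omega_star s k W m X \<or> alpha_star s k W m X"

definition is_top where
  "is_top s k W m X \<longleftrightarrow> alpha_top s k W m X \<or> omega_top s k W m X"

end

theory Submission
  imports Defs
begin

text \<open>Two distinct points \<open>x, y\<close> of a \<open>k\<close>-pencil \<open>p(H,B)\<close> determine it: \<open>H = x \<inter> y\<close>
and \<open>B = x + y\<close>. A plane of the Grassmann space fixes either a \<open>(k+1)\<close>-space or a
\<open>(k-1)\<close>-space, so two coplanar lines share their \<open>B\<close> or their \<open>H\<close>; of the three pairs among
three pairwise coplanar lines, two agree in kind and have a line in common, hence all three lines
share \<open>H\<close> or share \<open>B\<close>. The proper points through \<open>H\<close> form a star: an \<open>\<alpha>\<close>-star if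
\<open>dim (H \<inter> W) = m\<close>, and otherwise every such point is \<open>H + \<langle>z\<rangle>\<close> with \<open>z \<in> W\<close>, which forces
\<open>dim (H \<inter> W) = m - 1\<close> and puts the point inside \<open>H + W\<close>, an \<open>\<omega>\<close>-star. Dually, the proper
points inside \<open>B\<close> form a top.\<close>

locale left_vector_space =
  fixes s :: "'k::division_ring \<Rightarrow> 'v::ab_group_add \<Rightarrow> 'v"
  assumes lvs: "lvs s"
begin

lemma scale_right_distrib: "s a (x + y) = s a x + s a y"
  using lvs unfolding lvs_def by blast

lemma scale_left_distrib: "s (a + b) x = s a x + s b x"
  using lvs unfolding lvs_def by blast

lemma scale_scale: "s a (s b x) = s (a * b) x"
  using lvs unfolding lvs_def by blast

lemma scale_one [simp]: "s 1 x = x"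
  using lvs unfolding lvs_def by blast

lemma scale_zero_right [simp]: "s a 0 = 0"
  using scale_right_distrib[of a 0 0] by simp

lemma scale_zero_left [simp]: "s 0 x = 0"
  using scale_left_distrib[of 0 0 x] by simp

lemma scale_minus_left: "s (- a) x = - s a x"
  using scale_left_distrib[of a "- a" x] by (simp add: eq_neg_iff_add_eq_0 add.commute)

lemma subsp_minus: "subsp s U \<Longrightarrow> x \<in> U \<Longrightarrow> - x \<in> U"
  using scale_minus_left[of 1 x] unfolding subsp_def by (metis scale_one)

lemma subsp_diff: "subsp s U \<Longrightarrow> x \<in> U \<Longrightarrow> y \<in> U \<Longrightarrow> x - y \<in> U"
  using subsp_minus[of U y] unfolding subsp_def diff_conv_add_uminus by blast

lemma subsp_Int: "subsp s U \<Longrightarrow> subsp s V \<Longrightarrow> subsp s (U \<inter> V)"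
  unfolding subsp_def by blast

lemma subsp_subsum:
  assumes "subsp s H" "subsp s W"
  shows "subsp s (subsum H W)"
  unfolding subsp_def subsum_def
proof (intro conjI ballI allI)
  show "0 \<in> {x + y |x y. x \<in> H \<and> y \<in> W}"
    using assms unfolding subsp_def by force
next
  fix x y assume "x \<in> {x + y |x y. x \<in> H \<and> y \<in> W}" "y \<in> {x + y |x y. x \<in> H \<and> y \<in> W}"
  then obtain a b c d where "x = a + b" "y = c + d" "a \<in> H" "b \<in> W" "c \<in> H" "d \<in> W"
    by blast
  moreover have "x + y = (a + c) + (b + d)"
    using calculation by (simp add: add_ac)
  ultimately show "x + y \<in> {x + y |x y. x \<in> H \<and> y \<in> W}"
    using assms unfolding subsp_def by blast
next
  fix e x assume "x \<in> {x + y |x y. x \<in> H \<and> y \<in> W}"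
  then obtain a b where "x = a + b" "a \<in> H" "b \<in> W"
    by blast
  moreover have "s e x = s e a + s e b"
    using calculation by (simp add: scale_right_distrib)
  ultimately show "s e x \<in> {x + y |x y. x \<in> H \<and> y \<in> W}"
    using assms unfolding subsp_def by blast
qed

lemma subsum_superset:
  assumes "subsp s H" "subsp s W"
  shows "H \<subseteq> subsum H W" "W \<subseteq> subsum H W"
proof -
  have "x = x + 0" "x = 0 + x" for x :: 'v
    by simp_all
  then show "H \<subseteq> subsum H W" "W \<subseteq> subsum H W"
    using assms unfolding subsum_def subsp_def by blast+
qed

lemma lspan_subsp: "subsp s (lspan s A)"
  unfolding subsp_def lspan_def by blast

lemma lspan_superset: "A \<subseteq> lspan s A"
  by (auto simp: lspan_def)

lemma lspan_least: "subsp s U \<Longrightarrow> A \<subseteq> U \<Longrightarrow> lspan s A \<subseteq> U"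
  by (auto simp: lspan_def)

lemma lspan_mono: "A \<subseteq> B \<Longrightarrow> lspan s A \<subseteq> lspan s B"
  by (meson lspan_least lspan_subsp lspan_superset order_trans)

lemma lspan_of_subsp: "subsp s U \<Longrightarrow> lspan s U = U"
  by (simp add: lspan_least lspan_superset subset_antisym)

lemma lspan_zero: "0 \<in> lspan s A"
  using lspan_subsp[of A] unfolding subsp_def by blast

lemma lspan_add: "x \<in> lspan s A \<Longrightarrow> y \<in> lspan s A \<Longrightarrow> x + y \<in> lspan s A"
  using lspan_subsp[of A] unfolding subsp_def by blast

lemma lspan_scale: "x \<in> lspan s A \<Longrightarrow> s c x \<in> lspan s A"
  using lspan_subsp[of A] unfolding subsp_def by blast

lemma lspan_insert: "lspan s (insert a A) = {s c a + y | c y. y \<in> lspan s A}" (is "_ = ?T")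
proof
  have memT: "\<And>c y. y \<in> lspan s A \<Longrightarrow> s c a + y \<in> ?T" by blast
  have "subsp s ?T"
    unfolding subsp_def
  proof (intro conjI ballI allI)
    show "0 \<in> ?T"
      using memT[OF lspan_zero, of 0] by simp
  next
    fix x y assume "x \<in> ?T" "y \<in> ?T"
    then obtain c1 y1 c2 y2 where xy: "x = s c1 a + y1" "y1 \<in> lspan s A"
        "y = s c2 a + y2" "y2 \<in> lspan s A"
      by blast
    have "x + y = s (c1 + c2) a + (y1 + y2)"
      unfolding xy(1,3) scale_left_distrib by (simp only: add_ac)
    then show "x + y \<in> ?T"
      using memT[OF lspan_add[OF xy(2,4)]] by simp
  next
    fix e x assume "x \<in> ?T"
    then obtain c1 y1 where xy: "x = s c1 a + y1" "y1 \<in> lspan s A"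
      by blast
    have "s e x = s (e * c1) a + s e y1"
      unfolding xy(1) by (simp only: scale_right_distrib scale_scale)
    then show "s e x \<in> ?T"
      using memT[OF lspan_scale[OF xy(2)]] by simp
  qed
  moreover have "insert a A \<subseteq> ?T"
  proof -
    have "a \<in> ?T"
      using memT[OF lspan_zero, of 1] by simp
    moreover have "x \<in> ?T" if "x \<in> A" for x
      using memT[of x 0] that lspan_superset[of A] by auto
    ultimately show ?thesis
      by blast
  qed
  ultimately show "lspan s (insert a A) \<subseteq> ?T"
    by (rule lspan_least)
next
  have "a \<in> lspan s (insert a A)" "lspan s A \<subseteq> lspan s (insert a A)"
    using lspan_superset lspan_mono by blast+
  then show "?T \<subseteq> lspan s (insert a A)"
    using lspan_add[OF lspan_scale] by blast
qed

lemma lspan_insert_exchange: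
  assumes "v \<in> lspan s (insert a A)" "v \<notin> lspan s A"
  shows "a \<in> lspan s (insert v A)"
proof -
  obtain c y where v: "v = s c a + y" "y \<in> lspan s A"
    using assms(1) lspan_insert by auto
  have "c \<noteq> 0"
    using assms(2) v by auto
  then have "s (inverse c) v = a + s (inverse c) y"
    using v(1) by (simp add: scale_right_distrib scale_scale)
  then have a: "a = s (inverse c) v - s (inverse c) y"
    by (simp add: algebra_simps)
  have "v \<in> lspan s (insert v A)" "y \<in> lspan s (insert v A)"
    using lspan_superset v(2) lspan_mono[of A "insert v A"] by blast+
  then show ?thesis
    unfolding a by (intro subsp_diff[OF lspan_subsp] lspan_scale)
qed

lemma lin_indep_insert:
  assumes "lin_indep s A" "u \<notin> lspan s A"
  shows "lin_indep s (insert u A)"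
  unfolding lin_indep_def
proof
  fix a assume a: "a \<in> insert u A"
  have uA: "u \<notin> A"
    using assms(2) lspan_superset[of A] by blast
  show "a \<notin> lspan s (insert u A - {a})"
  proof (cases "a = u")
    case True
    then have "insert u A - {a} = A"
      using uA by auto
    then show ?thesis
      using assms True by simp
  next
    case False
    then have aA: "a \<in> A" and eq: "insert u A - {a} = insert u (A - {a})"
      using a by auto
    have "a \<notin> lspan s (A - {a})"
      using assms(1) aA unfolding lin_indep_def by blast
    moreover have "insert a (A - {a}) = A"
      using aA by auto
    ultimately show ?thesis
      unfolding eq using assms(2) lspan_insert_exchange[of a u "A - {a}"] by auto
  qed
qed

lemma lspan_exchange:
  assumes "b \<in> B" "a \<in> lspan s B" "a \<notin> lspan s (B - {b})"
  shows "lspan s B \<subseteq> lspan s (insert a (B - {b}))"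
proof -
  have "insert b (B - {b}) = B"
    using assms(1) by blast
  then have "b \<in> lspan s (insert a (B - {b}))"
    using lspan_insert_exchange[of a b "B - {b}"] assms(2,3) by simp
  moreover have "B - {b} \<subseteq> lspan s (insert a (B - {b}))"
    using lspan_superset[of "insert a (B - {b})"] by blast
  ultimately have "B \<subseteq> lspan s (insert a (B - {b}))"
    by blast
  then show ?thesis
    by (rule lspan_least[OF lspan_subsp])
qed

lemma lin_indep_card_le:
  assumes "finite A" "finite B" "lin_indep s A" "A \<subseteq> lspan s B"
  shows "card A \<le> card B"
  using assms
proof (induction "card (B - A)" arbitrary: B rule: less_induct)
  case (less B)
  show ?case
  proof (cases "B \<subseteq> A")
    case True
    have "A \<subseteq> B"
    proof
      fix a assume a: "a \<in> A"
      show "a \<in> B"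
      proof (rule ccontr)
        assume "a \<notin> B"
        then have "B \<subseteq> A - {a}"
          using True by blast
        then have "a \<in> lspan s (A - {a})"
          using less.prems(4) a lspan_mono by blast
        then show False
          using less.prems(3) a unfolding lin_indep_def by blast
      qed
    qed
    then show ?thesis
      using less.prems(2) card_mono by blast
  next
    case False
    then obtain b where b: "b \<in> B" "b \<notin> A"
      by blast
    have card_less: "card ((B - A) - {b}) < card (B - A)"
      using b less.prems(2) by (intro card_Diff1_less) auto
    show ?thesis
    proof (cases "A \<subseteq> lspan s (B - {b})")
      case True
      have "(B - {b}) - A = (B - A) - {b}"
        by blast
      then have "card ((B - {b}) - A) < card (B - A)"
        using card_less by simp
      moreover have "finite (B - {b})"
        using less.prems(2) by simp
      ultimately have "card A \<le> card (B - {b})"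
        by (rule less.hyps[OF _ less.prems(1) _ less.prems(3) True])
      also have "\<dots> \<le> card B"
        by (rule card_Diff1_le)
      finally show ?thesis .
    next
      case False
      then obtain a where a: "a \<in> A" "a \<notin> lspan s (B - {b})"
        by blast
      define B' where "B' = insert a (B - {b})"
      have "a \<notin> B - {b}"
        using a(2) lspan_superset[of "B - {b}"] by blast
      then have "card B' = Suc (card (B - {b}))"
        unfolding B'_def using less.prems(2) by (intro card_insert_disjoint) auto
      also have "\<dots> = card B"
        using less.prems(2) b(1) by (rule card_Suc_Diff1)
      finally have card_B': "card B' = card B" .
      have "B' - A = (B - A) - {b}"
        unfolding B'_def using a(1) by auto
      have "card A \<le> card B'"
      proof (rule less.hyps[OF _ less.prems(1) _ less.prems(3)])
        show "card (B' - A) < card (B - A)"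
          using \<open>B' - A = (B - A) - {b}\<close> card_less by simp
        show "finite B'"
          unfolding B'_def using less.prems(2) by simp
        show "A \<subseteq> lspan s B'"
          unfolding B'_def using lspan_exchange[OF b(1) _ a(2)] less.prems(4) a(1) by blast
      qed
      then show ?thesis
        using card_B' by simp
    qed
  qed
qed

lemma has_dim_subsp: "has_dim s U d \<Longrightarrow> subsp s U"
  unfolding has_dim_def by blast

lemma has_dim_unique: "has_dim s U a \<Longrightarrow> has_dim s U b \<Longrightarrow> a = b"
  unfolding has_dim_def by (metis le_antisym lin_indep_card_le)

lemma has_dim_subset_eq:
  assumes V: "has_dim s V d" and U: "has_dim s U d" and "V \<subseteq> U"
  shows "V = U"
proof (rule ccontr)
  assume "V \<noteq> U"
  then obtain u where u: "u \<in> U" "u \<notin> V"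
    using \<open>V \<subseteq> U\<close> by blast
  obtain D where D: "finite D" "card D = d" "lin_indep s D" "D \<subseteq> V" "lspan s D = V"
    using V unfolding has_dim_def by blast
  obtain E where E: "finite E" "card E = d" "lspan s E = U"
    using U unfolding has_dim_def by blast
  have "u \<notin> D"
    using D(4) u by blast
  have "card (insert u D) \<le> card E"
  proof (rule lin_indep_card_le)
    show "lin_indep s (insert u D)"
      using lin_indep_insert D u by simp
    show "insert u D \<subseteq> lspan s E"
      using E u D \<open>V \<subseteq> U\<close> by blast
  qed (use D E in simp_all)
  then show False
    using D E \<open>u \<notin> D\<close> by simp
qed

lemma has_dim_lspan_insert:
  assumes V: "has_dim s V d" and z: "z \<notin> V"
  shows "has_dim s (lspan s (insert z V)) (Suc d)"
proof -
  obtain D where D: "finite D" "card D = d" "lin_indep s D" "D \<subseteq> V" "lspan s D = V"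
    using V unfolding has_dim_def by blast
  have "insert z V \<subseteq> lspan s (insert z D)"
    using D(5) lspan_mono[of D "insert z D"] lspan_superset[of "insert z D"] by blast
  then have eq: "lspan s (insert z D) = lspan s (insert z V)"
    using D(4) lspan_mono[of "insert z D" "insert z V"] lspan_least[OF lspan_subsp] by blast
  have "z \<notin> D"
    using D(4) z by blast
  then show ?thesis
    unfolding has_dim_def
    using D z eq lspan_subsp lspan_superset[of "insert z D"] lin_indep_insert
    by (intro conjI exI[of _ "insert z D"]) auto
qed

lemma subsp_has_dim:
  assumes U: "subsp s U" and "U \<subseteq> V" and V: "has_dim s V n"
  shows "\<exists>d. has_dim s U d"
proof -
  obtain E where E: "finite E" "lspan s E = V" "card E = n"
    using V unfolding has_dim_def by blast
  let ?C = "{card A | A. finite A \<and> A \<subseteq> U \<and> lin_indep s A}"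
  have "finite ?C"
    using lin_indep_card_le E \<open>U \<subseteq> V\<close> finite_subset[of ?C "{..n}"] by fastforce
  moreover have "0 \<in> ?C"
    by (rule CollectI, rule exI[of _ "{}"]) (auto simp: lin_indep_def)
  ultimately have "Max ?C \<in> ?C"
    using Max_in by blast
  then obtain A where A: "finite A" "A \<subseteq> U" "lin_indep s A" "card A = Max ?C"
    by auto
  have "U \<subseteq> lspan s A"
  proof
    fix u assume u: "u \<in> U"
    show "u \<in> lspan s A"
    proof (rule ccontr)
      assume u_new: "u \<notin> lspan s A"
      then have "card (insert u A) \<in> ?C"
        using lin_indep_insert A u by blast
      then have "card (insert u A) \<le> Max ?C"
        using \<open>finite ?C\<close> by simp
      moreover have "u \<notin> A"
        using u_new lspan_superset[of A] by blast
      ultimately show False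
        using A by simp
    qed
  qed
  then have "lspan s A = U"
    using lspan_least[OF U] A by blast
  then show ?thesis
    using A U unfolding has_dim_def by blast
qed

lemma lspan_insert_Int:
  assumes X: "subsp s X" and W: "subsp s W" and z: "z \<in> W"
  shows "lspan s (insert z X) \<inter> W = lspan s (insert z (X \<inter> W))"
proof
  have "insert z (X \<inter> W) \<subseteq> lspan s (insert z X) \<inter> W"
    using lspan_superset[of "insert z X"] z by blast
  then show "lspan s (insert z (X \<inter> W)) \<subseteq> lspan s (insert z X) \<inter> W"
    using lspan_least subsp_Int[OF lspan_subsp W] by blast
next
  show "lspan s (insert z X) \<inter> W \<subseteq> lspan s (insert z (X \<inter> W))"
  proof
    fix y assume y: "y \<in> lspan s (insert z X) \<inter> W"
    then obtain c h where ch: "y = s c z + h" "h \<in> lspan s X"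
      using lspan_insert by auto
    have "s c z \<in> W"
      using W z unfolding subsp_def by blast
    then have "h \<in> W"
      using subsp_diff[OF W, of y "s c z"] y ch(1) by (simp add: algebra_simps)
    moreover have "h \<in> X"
      using ch(2) lspan_of_subsp[OF X] by blast
    ultimately have "h \<in> lspan s (X \<inter> W)"
      using lspan_superset[of "X \<inter> W"] by blast
    then show "y \<in> lspan s (insert z (X \<inter> W))"
      using ch(1) lspan_insert by blast
  qed
qed

lemma lspan_insert_eq_if_has_dim_Suc:
  assumes "has_dim s V d" "has_dim s U (Suc d)" "V \<subseteq> U" "z \<in> U" "z \<notin> V"
  shows "lspan s (insert z V) = U"
proof -
  have "lspan s (insert z V) \<subseteq> U"
    using lspan_least[OF has_dim_subsp[OF assms(2)]] assms(3,4) by blast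
  then show ?thesis
    using has_dim_subset_eq has_dim_lspan_insert assms by blast
qed

lemma common_hyperplane_eq_Int:
  assumes "x \<in> Sub s k" "y \<in> Sub s k" "x \<noteq> y" "H \<in> Sub s (k - 1)" "H \<subseteq> x" "H \<subseteq> y" "0 < k"
  shows "H = x \<inter> y"
proof (rule ccontr)
  assume "H \<noteq> x \<inter> y"
  then obtain z where z: "z \<in> x" "z \<in> y" "z \<notin> H"
    using assms(5,6) by blast
  have H: "has_dim s H (k - 1)" and x: "has_dim s x (Suc (k - 1))" and y: "has_dim s y (Suc (k - 1))"
    using assms(1,2,4,7) by (simp_all add: Sub_def)
  have "lspan s (insert z H) = x" "lspan s (insert z H) = y"
    using lspan_insert_eq_if_has_dim_Suc[OF H x assms(5) z(1,3)]
      lspan_insert_eq_if_has_dim_Suc[OF H y assms(6) z(2,3)] .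
  then show False
    using assms(3) by simp
qed

lemma common_superspace_eq_lspan_Un:
  assumes "x \<in> Sub s k" "y \<in> Sub s k" "x \<noteq> y" "B \<in> Sub s (k + 1)" "x \<subseteq> B" "y \<subseteq> B"
  shows "B = lspan s (x \<union> y)"
proof -
  have x: "has_dim s x k" and y: "has_dim s y k" and B: "has_dim s B (Suc k)"
    using assms(1,2,4) by (simp_all add: Sub_def)
  obtain z where z: "z \<in> y" "z \<notin> x"
    using has_dim_subset_eq[OF y x] assms(3) by blast
  have "B = lspan s (insert z x)"
    using lspan_insert_eq_if_has_dim_Suc[OF x B assms(5) _ z(2)] z(1) assms(6) by blast
  also have "\<dots> \<subseteq> lspan s (x \<union> y)"
    using z(1) by (intro lspan_mono) blast
  finally show ?thesis
    using lspan_least[OF has_dim_subsp[OF B]] assms(5,6) by blast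
qed

lemma coplanar_pencils_same_vertex_or_span:
  assumes "1 < k"
    and L1: "L1 = pencil s k H1 B1 \<inter> spine_points s k W m" "H1 \<in> Sub s (k - 1)" "B1 \<in> Sub s (k + 1)"
      "x1 \<noteq> y1" "x1 \<in> L1" "y1 \<in> L1"
    and L2: "L2 = pencil s k H2 B2 \<inter> spine_points s k W m" "H2 \<in> Sub s (k - 1)" "B2 \<in> Sub s (k + 1)"
      "x2 \<noteq> y2" "x2 \<in> L2" "y2 \<in> L2"
    and "coplanar s k W m L1 L2"
  shows "H1 = H2 \<or> B1 = B2"
proof -
  obtain E where E: "spine_plane s k W m E" "L1 \<subseteq> E" "L2 \<subseteq> E"
    using assms(14) unfolding coplanar_def by blast
  obtain P where P: "is_PG_plane s k P" "E = P \<inter> spine_points s k W m"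
    using E(1) unfolding spine_plane_def by blast
  obtain Y Z where YZ: "(Y \<in> Sub s (k - 2) \<and> Z \<in> Sub s (k + 1)) \<or> (Y \<in> Sub s (k - 1) \<and> Z \<in> Sub s (k + 2))"
    and P_eq: "P = {U \<in> Sub s k. Y \<subseteq> U \<and> U \<subseteq> Z}"
    using P(1) unfolding is_PG_plane_def by blast
  have in_plane: "Y \<subseteq> U \<and> U \<subseteq> Z" if "U \<in> L1 \<union> L2" for U
    using that E(2,3) P(2) P_eq by blast
  have p1: "x1 \<in> Sub s k" "y1 \<in> Sub s k" "H1 \<subseteq> x1" "H1 \<subseteq> y1" "x1 \<subseteq> B1" "y1 \<subseteq> B1"
    using L1 unfolding pencil_def by auto
  have p2: "x2 \<in> Sub s k" "y2 \<in> Sub s k" "H2 \<subseteq> x2" "H2 \<subseteq> y2" "x2 \<subseteq> B2" "y2 \<subseteq> B2"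
    using L2 unfolding pencil_def by auto
  have "0 < k"
    using assms(1) by simp
  from YZ show ?thesis
  proof
    assume Z: "Y \<in> Sub s (k - 2) \<and> Z \<in> Sub s (k + 1)"
    have "B1 = lspan s (x1 \<union> y1)" "B2 = lspan s (x2 \<union> y2)"
      using common_superspace_eq_lspan_Un[OF p1(1,2) L1(4) L1(3) p1(5,6)]
        common_superspace_eq_lspan_Un[OF p2(1,2) L2(4) L2(3) p2(5,6)] .
    moreover have "Z = lspan s (x1 \<union> y1)" "Z = lspan s (x2 \<union> y2)"
      using common_superspace_eq_lspan_Un[OF p1(1,2) L1(4), of Z]
        common_superspace_eq_lspan_Un[OF p2(1,2) L2(4), of Z]
        Z in_plane[of x1] in_plane[of y1] in_plane[of x2] in_plane[of y2] L1(5,6) L2(5,6)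
      by simp_all
    ultimately show ?thesis
      by simp
  next
    assume Y: "Y \<in> Sub s (k - 1) \<and> Z \<in> Sub s (k + 2)"
    have "H1 = x1 \<inter> y1" "H2 = x2 \<inter> y2"
      using common_hyperplane_eq_Int[OF p1(1,2) L1(4) L1(2) p1(3,4) \<open>0 < k\<close>]
        common_hyperplane_eq_Int[OF p2(1,2) L2(4) L2(2) p2(3,4) \<open>0 < k\<close>] .
    moreover have "Y = x1 \<inter> y1" "Y = x2 \<inter> y2"
      using common_hyperplane_eq_Int[OF p1(1,2) L1(4), of Y]
        common_hyperplane_eq_Int[OF p2(1,2) L2(4), of Y]
        Y in_plane[of x1] in_plane[of y1] in_plane[of x2] in_plane[of y2] L1(5,6) L2(5,6) \<open>0 < k\<close>
      by simp_all
    ultimately show ?thesis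
      by simp
  qed
qed

lemma spine_points_through_subset_star:
  assumes H: "H \<in> Sub s (k - 1)" and "0 < k" and W: "subsp s W"
    and Q: "Q \<subseteq> {U \<in> spine_points s k W m. H \<subseteq> U}" and "Q \<noteq> {}"
  shows "\<exists>X. is_star s k W m X \<and> Q \<subseteq> X"
proof (cases "has_dim s (H \<inter> W) m")
  case True
  then have "alpha_star s k W m {U \<in> spine_points s k W m. H \<subseteq> U}"
    using H unfolding alpha_star_def by blast
  then show ?thesis
    using Q unfolding is_star_def by blast
next
  case False
  have Hd: "has_dim s H (k - 1)"
    using H by (simp add: Sub_def)
  have sH: "subsp s H"
    by (rule has_dim_subsp[OF Hd])
  have point_split: "\<exists>z. z \<in> W \<and> z \<notin> H \<and> U = lspan s (insert z H)
      \<and> U \<inter> W = lspan s (insert z (H \<inter> W))" if "U \<in> Q" for U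
  proof -
    have U: "has_dim s U (Suc (k - 1))" "has_dim s (U \<inter> W) m" "H \<subseteq> U"
      using Q that \<open>0 < k\<close> unfolding spine_points_def by (auto simp: Sub_def)
    have "\<not> U \<inter> W \<subseteq> H"
    proof
      assume "U \<inter> W \<subseteq> H"
      then have "U \<inter> W = H \<inter> W"
        using U(3) by blast
      then show False
        using U(2) False by simp
    qed
    then obtain z where z: "z \<in> U" "z \<in> W" "z \<notin> H"
      by blast
    have "U = lspan s (insert z H)"
      using lspan_insert_eq_if_has_dim_Suc[OF Hd U(1) U(3) z(1,3)] by simp
    then show ?thesis
      using lspan_insert_Int[OF sH W z(2)] z(2,3) by blast
  qed
  obtain d where d: "has_dim s (H \<inter> W) d"
    using subsp_has_dim[OF subsp_Int[OF sH W] _ Hd] by blast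
  obtain x where x: "x \<in> Q"
    using \<open>Q \<noteq> {}\<close> by blast
  then obtain z where z: "z \<notin> H" "x \<inter> W = lspan s (insert z (H \<inter> W))"
    using point_split by blast
  then have "has_dim s (x \<inter> W) (Suc d)"
    using has_dim_lspan_insert[OF d] by simp
  moreover have "has_dim s (x \<inter> W) m"
    using Q x unfolding spine_points_def by blast
  ultimately have "m = Suc d"
    using has_dim_unique by blast
  then have "omega_star s k W m {U \<in> Sub s k. H \<subseteq> U \<and> U \<subseteq> subsum H W}"
    unfolding omega_star_def using H d by auto
  moreover have "U \<subseteq> subsum H W" if U: "U \<in> Q" for U
  proof -
    obtain z where "z \<in> W" "U = lspan s (insert z H)"
      using point_split[OF U] by blast
    then show ?thesis
      using subsum_superset[OF sH W] lspan_least[OF subsp_subsum[OF sH W]] by blast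
  qed
  ultimately show ?thesis
    using Q unfolding is_star_def spine_points_def by blast
qed

lemma spine_points_within_subset_top:
  assumes B: "B \<in> Sub s (k + 1)" and W: "subsp s W"
    and Q: "Q \<subseteq> {U \<in> spine_points s k W m. U \<subseteq> B}" and "Q \<noteq> {}"
  shows "\<exists>X. is_top s k W m X \<and> Q \<subseteq> X"
proof (cases "has_dim s (B \<inter> W) (m + 1)")
  case True
  then have "omega_top s k W m {U \<in> spine_points s k W m. U \<subseteq> B}"
    using B unfolding omega_top_def by blast
  then show ?thesis
    using Q unfolding is_top_def by blast
next
  case False
  have Bd: "has_dim s B (Suc k)"
    using B by (simp add: Sub_def)
  have point_meet: "B \<inter> W = U \<inter> W" if "U \<in> Q" for U
  proof -
    have U: "has_dim s U k" "has_dim s (U \<inter> W) m" "U \<subseteq> B"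
      using Q that unfolding spine_points_def by (auto simp: Sub_def)
    have "B \<inter> W \<subseteq> U"
    proof
      fix z assume z: "z \<in> B \<inter> W"
      show "z \<in> U"
      proof (rule ccontr)
        assume "z \<notin> U"
        then have "lspan s (insert z U) = B"
          using lspan_insert_eq_if_has_dim_Suc[OF U(1) Bd U(3)] z by blast
        then have "B \<inter> W = lspan s (insert z (U \<inter> W))"
          using lspan_insert_Int[OF has_dim_subsp[OF U(1)] W] z by blast
        then show False
          using has_dim_lspan_insert[OF U(2)] \<open>z \<notin> U\<close> False by simp
      qed
    qed
    then show ?thesis
      using U(3) by blast
  qed
  obtain x where x: "x \<in> Q"
    using \<open>Q \<noteq> {}\<close> by blast
  then have "has_dim s (B \<inter> W) m"
    using point_meet Q unfolding spine_points_def by auto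
  then have "alpha_top s k W m {U \<in> Sub s k. B \<inter> W \<subseteq> U \<and> U \<subseteq> B}"
    unfolding alpha_top_def using B by blast
  moreover have "Q \<subseteq> {U \<in> Sub s k. B \<inter> W \<subseteq> U \<and> U \<subseteq> B}"
    using point_meet Q unfolding spine_points_def by blast
  ultimately show ?thesis
    unfolding is_top_def by blast
qed

end

lemma spine_lineE:
  assumes "spine_line s k W m L"
  obtains H B x y where "L = pencil s k H B \<inter> spine_points s k W m"
    "H \<in> Sub s (k - 1)" "B \<in> Sub s (k + 1)" "x \<noteq> y" "x \<in> L" "y \<in> L"
  using assms unfolding spine_line_def is_pencil_def by blast

theorem lemma1p2:
  fixes s :: "'k::division_ring \<Rightarrow> 'v::ab_group_add \<Rightarrow> 'v"
    and W :: "'v set" and n k w m :: nat and L1 L2 L3 :: "'v set set"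
  assumes "lvs s" and "has_dim s UNIV n" and "3 \<le> n"
    and "1 < k" and "k < n - 1"
    and "has_dim s W w"
    and "int k - (int n - int w) \<le> int m" and "m \<le> min k w"
    and "spine_line s k W m L1" and "spine_line s k W m L2" and "spine_line s k W m L3"
    and "coplanar s k W m L1 L2" and "coplanar s k W m L1 L3" and "coplanar s k W m L2 L3"
    and "\<exists>U. U \<in> line_closure s k L1 \<and> U \<in> line_closure s k L2 \<and> U \<in> line_closure s k L3"
    and "\<not> (\<exists>E. spine_plane s k W m E \<and> L1 \<subseteq> E \<and> L2 \<subseteq> E \<and> L3 \<subseteq> E)"
  shows "(\<exists>X. is_star s k W m X \<and> L1 \<subseteq> X \<and> L2 \<subseteq> X \<and> L3 \<subseteq> X)
       \<or> (\<exists>X. is_top s k W m X \<and> L1 \<subseteq> X \<and> L2 \<subseteq> X \<and> L3 \<subseteq> X)"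
proof -
  interpret left_vector_space s
    by unfold_locales (rule assms(1))
  have W: "subsp s W"
    by (rule has_dim_subsp[OF assms(6)])
  obtain H1 B1 x1 y1 where L1: "L1 = pencil s k H1 B1 \<inter> spine_points s k W m" "H1 \<in> Sub s (k - 1)"
      "B1 \<in> Sub s (k + 1)" "x1 \<noteq> y1" "x1 \<in> L1" "y1 \<in> L1"
    using spine_lineE[OF assms(9)] by blast
  obtain H2 B2 x2 y2 where L2: "L2 = pencil s k H2 B2 \<inter> spine_points s k W m" "H2 \<in> Sub s (k - 1)"
      "B2 \<in> Sub s (k + 1)" "x2 \<noteq> y2" "x2 \<in> L2" "y2 \<in> L2"
    using spine_lineE[OF assms(10)] by blast
  obtain H3 B3 x3 y3 where L3: "L3 = pencil s k H3 B3 \<inter> spine_points s k W m" "H3 \<in> Sub s (k - 1)"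
      "B3 \<in> Sub s (k + 1)" "x3 \<noteq> y3" "x3 \<in> L3" "y3 \<in> L3"
    using spine_lineE[OF assms(11)] by blast
  have "H1 = H2 \<or> B1 = B2" "H1 = H3 \<or> B1 = B3" "H2 = H3 \<or> B2 = B3"
    using coplanar_pencils_same_vertex_or_span[OF assms(4) L1 L2 assms(12)]
      coplanar_pencils_same_vertex_or_span[OF assms(4) L1 L3 assms(13)]
      coplanar_pencils_same_vertex_or_span[OF assms(4) L2 L3 assms(14)] .
  then consider "H2 = H1" "H3 = H1" | "B2 = B1" "B3 = B1"
    by blast
  then show ?thesis
  proof cases
    case 1
    then have "L1 \<union> L2 \<union> L3 \<subseteq> {U \<in> spine_points s k W m. H1 \<subseteq> U}"
      using L1(1) L2(1) L3(1) unfolding pencil_def by auto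
    from spine_points_through_subset_star[OF L1(2) _ W this] assms(4) L1(5)
    show ?thesis
      by auto
  next
    case 2
    then have "L1 \<union> L2 \<union> L3 \<subseteq> {U \<in> spine_points s k W m. U \<subseteq> B1}"
      using L1(1) L2(1) L3(1) unfolding pencil_def by auto
    from spine_points_within_subset_top[OF L1(3) W this] L1(5)
    show ?thesis
      by auto
  qed
qed

end
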